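(* Let $G=(V,E)$ be a network and consider a rate-$\omega$ LNEC code over a finite field $\mathbb{F}$ on $G$, as described in the context. Let $t$ be a sink node with $C_t\ge\omega$ and let $r$ be a nonnegative integer with $r\le C_t-\omega$. Then $$\Phi(t)\cap\Delta(t,\xi)=\{0\}\quad\text{for all }\xi\in\mathcal{E}_t(r)$$ if and only if $$\Phi(t)\cap\Delta(t,\xi)=\{0\}\quad\text{for all }\xi\in\mathcal{A}_t(r).$$
   Context: Network: $G=(V,E)$ is a finite directed acyclic graph (parallel edges allowed) with a single source node $s$ and a set of sink nodes $T\subseteq V\setminus\{s\}$; $s$ has no incoming edges and sink nodes have no outgoing edges. For an edge $e$, $\mathrm{tail}(e)$, $\mathrm{head}(e)$ are its tail and head; $\mathrm{In}(v)$, $\mathrm{Out}(v)$ are the incoming/outgoing edge sets of node $v$. A directed path is a sequence of edges $(e_1,\dots,e_m)$, $m\ge1$, with $\mathrm{tail}(e_{k+1})=\mathrm{head}(e_k)$. A cut separating node $v$ from node $u$ is a set of edges whose removal leaves no directed path from $u$ to $v$; $C_t$ is the minimum size of a cut separating sink $t$ from $s$. LNEC code: with rate $\omega\ge1$ and finite field $\mathbb{F}$, introduce imaginary source edges $d_1',\dots,d_\omega'$ ending at $s$ with $\mathrm{In}(s)=\{d_1',\dots,d_\omega'\}$, and for each $e\in E$ an imaginary error edge $e'$ with head $\mathrm{tail}(e)$; $E'=\{e':e\in E\}$ (for non-source nodes, $\mathrm{In}(v)$ contains only edges of $E$). The code is given by local encoding coefficients $k_{d,e}\in\mathbb{F}$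 for $e\in E$, $d\in\mathrm{In}(\mathrm{tail}(e))$. Extended global encoding kernels are vectors in $\mathbb{F}^{\omega+|E|}$ indexed by $\{d_i'\}\cup E'$: $\tilde f_{d_i'}=1_{d_i'}$, $\tilde f_{e'}=1_{e'}$ (standard basis vectors), and recursively in topological order $\tilde f_e=\sum_{d\in\mathrm{In}(\mathrm{tail}(e))}k_{d,e}\tilde f_d+1_{e'}$. For sink $t$, $\mathrm{row}_t(d')=(\tilde f_{\hat e}(d'):\hat e\in\mathrm{In}(t))$. Message space $\Phi(t)=\langle\mathrm{row}_t(d_i'):1\le i\le\omega\rangle$; error space of $\xi\subseteq E$: $\Delta(t,\xi)=\langle\mathrm{row}_t(e'):e\in\xi\rangle$ (spans in $\mathbb{F}^{|\mathrm{In}(t)|}$). Graph notions: for $\xi\subseteq E$ and a node $u$, $A\subseteq E$ is a cut separating $u$ from $\xi$ if every directed path in $G$ whose first edge lies in $\xi$ and whose last edge has head $u$ contains an edge of $A$ (equivalently, $A$ separates $\xi$ from $u$ in the reversed network). $\mathrm{mincut}(\xi,u)$ is the minimum size of such a cut; a cut of that size is a minimum cut separating $u$ from $\xi$. A minimum cut separating $u$ from $\xi$ is primary if it separates $u$ from every minimum cut separating $u$ from $\xi$; it exists and is unique. $\xi$ is primary for $u$ if $\xi$ is the primary minimum cut separating $u$ from $\xi$. For a sink $t$ and integer $r\ge0$: $\mathcal{E}_t(r)=\{\xi\subseteq E:\mathrm{mincut}(\xi,t)\le r\}$ and $\mathcal{A}_t(r)=\{\xi\subseteq E:|\xi|=r,\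 \xi\text{ primary for }t\}$. *)

theory Defs
  imports Main
begin

text \<open>Edges have an abstract type 'e (so parallel edges are allowed); tail and head
  map edges to nodes.  A directed path is a nonempty list of edges of E, consecutive.\<close>

definition is_path :: "'e set \<Rightarrow> ('e \<Rightarrow> 'v) \<Rightarrow> ('e \<Rightarrow> 'v) \<Rightarrow> 'e list \<Rightarrow> bool" where
  "is_path E tail head p \<longleftrightarrow> p \<noteq> [] \<and> set p \<subseteq> E \<and>
     (\<forall>i. Suc i < length p \<longrightarrow> tail (p ! Suc i) = head (p ! i))"

definition network :: "'v set \<Rightarrow> 'e set \<Rightarrow> ('e \<Rightarrow> 'v) \<Rightarrow> ('e \<Rightarrow> 'v) \<Rightarrow> 'v \<Rightarrow> 'v set \<Rightarrow> bool" where
  "network V E tail head s T \<longleftrightarrow>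
     finite V \<and> finite E \<and> (\<forall>e\<in>E. tail e \<in> V \<and> head e \<in> V) \<and>
     s \<in> V \<and> T \<subseteq> V - {s} \<and>
     (\<forall>e\<in>E. head e \<noteq> s) \<and> (\<forall>e\<in>E. tail e \<notin> T) \<and>
     (\<forall>p. is_path E tail head p \<longrightarrow> tail (hd p) \<noteq> head (last p))"

definition In_edges :: "'e set \<Rightarrow> ('e \<Rightarrow> 'v) \<Rightarrow> 'v \<Rightarrow> 'e set" where
  "In_edges E head v = {d \<in> E. head d = v}"

definition node_cut :: "'e set \<Rightarrow> ('e \<Rightarrow> 'v) \<Rightarrow> ('e \<Rightarrow> 'v) \<Rightarrow> 'e set \<Rightarrow> 'v \<Rightarrow> 'v \<Rightarrow> bool" where
  "node_cut E tail head A u v \<longleftrightarrow> A \<subseteq> E \<and>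
     (\<forall>p. is_path E tail head p \<and> tail (hd p) = u \<and> head (last p) = v \<longrightarrow> set p \<inter> A \<noteq> {})"

text \<open>C_t: minimum size of a cut separating t from s.\<close>
definition maxflow :: "'e set \<Rightarrow> ('e \<Rightarrow> 'v) \<Rightarrow> ('e \<Rightarrow> 'v) \<Rightarrow> 'v \<Rightarrow> 'v \<Rightarrow> nat" where
  "maxflow E tail head s t = (LEAST n. \<exists>A. node_cut E tail head A s t \<and> card A = n)"

definition set_cut :: "'e set \<Rightarrow> ('e \<Rightarrow> 'v) \<Rightarrow> ('e \<Rightarrow> 'v) \<Rightarrow> 'e set \<Rightarrow> 'e set \<Rightarrow> 'v \<Rightarrow> bool" where
  "set_cut E tail head A xi u \<longleftrightarrow> A \<subseteq> E \<and>
     (\<forall>p. is_path E tail head p \<and> hd p \<in> xi \<and> head (last p) = u \<longrightarrow> set p \<inter> A \<noteq> {})"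

definition mincut :: "'e set \<Rightarrow> ('e \<Rightarrow> 'v) \<Rightarrow> ('e \<Rightarrow> 'v) \<Rightarrow> 'e set \<Rightarrow> 'v \<Rightarrow> nat" where
  "mincut E tail head xi u = (LEAST n. \<exists>A. set_cut E tail head A xi u \<and> card A = n)"

definition min_set_cut :: "'e set \<Rightarrow> ('e \<Rightarrow> 'v) \<Rightarrow> ('e \<Rightarrow> 'v) \<Rightarrow> 'e set \<Rightarrow> 'e set \<Rightarrow> 'v \<Rightarrow> bool" where
  "min_set_cut E tail head A xi u \<longleftrightarrow>
     set_cut E tail head A xi u \<and> card A = mincut E tail head xi u"

definition primary_cut :: "'e set \<Rightarrow> ('e \<Rightarrow> 'v) \<Rightarrow> ('e \<Rightarrow> 'v) \<Rightarrow> 'e set \<Rightarrow> 'e set \<Rightarrow> 'v \<Rightarrow> bool" where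
  "primary_cut E tail head A xi u \<longleftrightarrow> min_set_cut E tail head A xi u \<and>
     (\<forall>B. min_set_cut E tail head B xi u \<longrightarrow> set_cut E tail head A B u)"

definition is_primary :: "'e set \<Rightarrow> ('e \<Rightarrow> 'v) \<Rightarrow> ('e \<Rightarrow> 'v) \<Rightarrow> 'e set \<Rightarrow> 'v \<Rightarrow> bool" where
  "is_primary E tail head xi u \<longleftrightarrow> primary_cut E tail head xi xi u"

definition calE :: "'e set \<Rightarrow> ('e \<Rightarrow> 'v) \<Rightarrow> ('e \<Rightarrow> 'v) \<Rightarrow> 'v \<Rightarrow> nat \<Rightarrow> 'e set set" where
  "calE E tail head t r = {xi. xi \<subseteq> E \<and> mincut E tail head xi t \<le> r}"

definition calA :: "'e set \<Rightarrow> ('e \<Rightarrow> 'v) \<Rightarrow> ('e \<Rightarrow> 'v) \<Rightarrow> 'v \<Rightarrow> nat \<Rightarrow> 'e set set" where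
  "calA E tail head t r = {xi. xi \<subseteq> E \<and> card xi = r \<and> is_primary E tail head xi t}"

text \<open>Coordinates of extended kernels: Inl i stands for the imaginary source edge d_i'
  (1 \<le> i \<le> omega), Inr e for the imaginary error edge e'.  Local encoding coefficients
  k d e are indexed the same way: d = Inl i is d_i' (only relevant when tail e = s),
  d = Inr d0 is the real edge d0.\<close>

definition In_ext :: "'e set \<Rightarrow> ('e \<Rightarrow> 'v) \<Rightarrow> 'v \<Rightarrow> nat \<Rightarrow> 'v \<Rightarrow> (nat + 'e) set" where
  "In_ext E head s \<omega> v = (if v = s then Inl ` {1..\<omega>} else Inr ` In_edges E head v)"

definition unitv :: "(nat + 'e) \<Rightarrow> (nat + 'e) \<Rightarrow> 'f::field" where
  "unitv a = (\<lambda>x. if x = a then 1 else 0)"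

definition gk_of :: "('e \<Rightarrow> (nat + 'e) \<Rightarrow> 'f::field) \<Rightarrow> (nat + 'e) \<Rightarrow> (nat + 'e) \<Rightarrow> 'f" where
  "gk_of F d = (case d of Inl i \<Rightarrow> unitv (Inl i) | Inr d0 \<Rightarrow> F d0)"

definition kernel_eqns ::
  "'e set \<Rightarrow> ('e \<Rightarrow> 'v) \<Rightarrow> ('e \<Rightarrow> 'v) \<Rightarrow> 'v \<Rightarrow> nat \<Rightarrow> ((nat + 'e) \<Rightarrow> 'e \<Rightarrow> 'f::field)
    \<Rightarrow> ('e \<Rightarrow> (nat + 'e) \<Rightarrow> 'f) \<Rightarrow> bool" where
  "kernel_eqns E tail head s \<omega> k F \<longleftrightarrow>
     (\<forall>e\<in>E. F e = (\<lambda>x. (\<Sum>d\<in>In_ext E head s \<omega> (tail e). k d e * gk_of F d x) + unitv (Inr e) x))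
     \<and> (\<forall>e. e \<notin> E \<longrightarrow> F e = (\<lambda>_. 0))"

text \<open>The extended global encoding kernels f~_e (e in E): the unique solution of the
  recursion (unique since G is acyclic).\<close>
definition ext_kernel ::
  "'e set \<Rightarrow> ('e \<Rightarrow> 'v) \<Rightarrow> ('e \<Rightarrow> 'v) \<Rightarrow> 'v \<Rightarrow> nat \<Rightarrow> ((nat + 'e) \<Rightarrow> 'e \<Rightarrow> 'f::field)
    \<Rightarrow> 'e \<Rightarrow> (nat + 'e) \<Rightarrow> 'f" where
  "ext_kernel E tail head s \<omega> k = (THE F. kernel_eqns E tail head s \<omega> k F)"

definition row ::
  "'e set \<Rightarrow> ('e \<Rightarrow> 'v) \<Rightarrow> ('e \<Rightarrow> 'v) \<Rightarrow> 'v \<Rightarrow> nat \<Rightarrow> ((nat + 'e) \<Rightarrow> 'e \<Rightarrow> 'f::field)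
    \<Rightarrow> 'v \<Rightarrow> (nat + 'e) \<Rightarrow> 'e \<Rightarrow> 'f" where
  "row E tail head s \<omega> k t a =
     (\<lambda>e. if e \<in> In_edges E head t then ext_kernel E tail head s \<omega> k e a else 0)"

definition lin_span :: "'i set \<Rightarrow> ('i \<Rightarrow> 'e \<Rightarrow> 'f::field) \<Rightarrow> ('e \<Rightarrow> 'f) set" where
  "lin_span I g = {(\<lambda>x. \<Sum>i\<in>I. c i * g i x) | c. True}"

definition msg_space ::
  "'e set \<Rightarrow> ('e \<Rightarrow> 'v) \<Rightarrow> ('e \<Rightarrow> 'v) \<Rightarrow> 'v \<Rightarrow> nat \<Rightarrow> ((nat + 'e) \<Rightarrow> 'e \<Rightarrow> 'f::field)
    \<Rightarrow> 'v \<Rightarrow> ('e \<Rightarrow> 'f) set" where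
  "msg_space E tail head s \<omega> k t = lin_span {1..\<omega>} (\<lambda>i. row E tail head s \<omega> k t (Inl i))"

definition err_space ::
  "'e set \<Rightarrow> ('e \<Rightarrow> 'v) \<Rightarrow> ('e \<Rightarrow> 'v) \<Rightarrow> 'v \<Rightarrow> nat \<Rightarrow> ((nat + 'e) \<Rightarrow> 'e \<Rightarrow> 'f::field)
    \<Rightarrow> 'v \<Rightarrow> 'e set \<Rightarrow> ('e \<Rightarrow> 'f) set" where
  "err_space E tail head s \<omega> k t xi = lin_span xi (\<lambda>e. row E tail head s \<omega> k t (Inr e))"

end

theory Submission
  imports Defs
begin

text \<open>Sets in A_t(r) have min cut r, so one direction is trivial.  Conversely, let \<xi>
  have min cut at most r.  Adding incoming edges of t one at a time raises the min cut by at
  most one per step and ends at |In(t)| \<ge> C_t \<ge> r, so some X \<supseteq> \<xi> has min cut exactly r;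
  its primary minimum cut P lies in A_t(r) and separates t from \<xi>.  Finally
  \<Delta>(t,\<xi>) \<subseteq> \<Delta>(t,P), since an error injected on an edge e of \<xi> reaches t only through P:
  row_t(e') is a combination of the rows of the edges leaving the head of e, and these lie
  in the span of the rows of P by induction downstream.\<close>

section \<open>Paths and linear spans\<close>

definition Out_edges :: "'e set \<Rightarrow> ('e \<Rightarrow> 'v) \<Rightarrow> 'v \<Rightarrow> 'e set" where
  "Out_edges E tail v = {e \<in> E. tail e = v}"

lemma is_path_Cons:
  "is_path E tail head (e # q) \<longleftrightarrow>
     e \<in> E \<and> (q = [] \<or> is_path E tail head q \<and> tail (hd q) = head e)"
  unfolding is_path_def by (cases q) (auto simp: nth_Cons split: nat.splits)

lemma is_path_singleton [simp]: "is_path E tail head [e] \<longleftrightarrow> e \<in> E"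
  by (simp add: is_path_Cons)

lemma is_path_nonempty: "is_path E tail head p \<Longrightarrow> p \<noteq> []"
  unfolding is_path_def by simp

lemma is_path_hd_in: "is_path E tail head p \<Longrightarrow> hd p \<in> E"
  unfolding is_path_def by auto

lemma lin_span_combination: "(\<lambda>x. \<Sum>i\<in>I. c i * g i x) \<in> lin_span I g"
  unfolding lin_span_def by blast

lemma zero_in_lin_span: "(\<lambda>_. 0) \<in> lin_span I g"
  using lin_span_combination[where c = "\<lambda>_. 0"] by simp

lemma generator_in_lin_span:
  assumes "finite I" "i \<in> I"
  shows "g i \<in> lin_span I g"
  using lin_span_combination[where c = "\<lambda>j. of_bool (j = i)" and I = I and g = g] assms by simp

lemma lin_span_subset:
  assumes "finite J" and h: "\<And>j. j \<in> J \<Longrightarrow> h j \<in> lin_span I g"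
  shows "lin_span J h \<subseteq> lin_span I g"
proof
  fix v assume "v \<in> lin_span J h"
  then obtain a where v: "v = (\<lambda>x. \<Sum>j\<in>J. a j * h j x)"
    unfolding lin_span_def by blast
  have "\<forall>j\<in>J. \<exists>c. h j = (\<lambda>x. \<Sum>i\<in>I. c i * g i x)"
    using h unfolding lin_span_def by blast
  then obtain c where c: "\<And>j. j \<in> J \<Longrightarrow> h j = (\<lambda>x. \<Sum>i\<in>I. c j i * g i x)"
    by metis
  have "v = (\<lambda>x. \<Sum>i\<in>I. (\<Sum>j\<in>J. a j * c j i) * g i x)"
  proof
    fix x
    have "v x = (\<Sum>j\<in>J. \<Sum>i\<in>I. a j * c j i * g i x)"
      using c by (simp add: v sum_distrib_left mult.assoc)
    also have "\<dots> = (\<Sum>i\<in>I. (\<Sum>j\<in>J. a j * c j i) * g i x)"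
      by (subst sum.swap) (simp add: sum_distrib_right)
    finally show "v x = (\<Sum>i\<in>I. (\<Sum>j\<in>J. a j * c j i) * g i x)" .
  qed
  then show "v \<in> lin_span I g"
    using lin_span_combination by metis
qed

section \<open>Cuts separating a sink from a set of edges\<close>

locale sink_cuts =
  fixes E :: "'e set" and tail head :: "'e \<Rightarrow> 'v" and t :: 'v
  assumes finite_E: "finite E"
begin

definition blocks :: "'e set \<Rightarrow> 'e \<Rightarrow> bool" where
  "blocks A e \<longleftrightarrow>
     (\<forall>p. is_path E tail head p \<and> hd p = e \<and> head (last p) = t \<longrightarrow> set p \<inter> A \<noteq> {})"

definition blocked_by :: "'e set \<Rightarrow> 'e set" where
  "blocked_by A = {e \<in> E. blocks A e}"

definition boundary :: "'e set \<Rightarrow> 'e set" where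
  "boundary S = {e \<in> S. head e = t \<or> \<not> Out_edges E tail (head e) \<subseteq> S}"

lemma set_cut_iff_blocks: "set_cut E tail head A X t \<longleftrightarrow> A \<subseteq> E \<and> (\<forall>e\<in>X. blocks A e)"
  unfolding set_cut_def blocks_def by blast

lemma blocks_member: "e \<in> A \<Longrightarrow> blocks A e"
  unfolding blocks_def by (metis disjoint_iff hd_in_set is_path_nonempty)

lemma blocks_mono: "A \<subseteq> B \<Longrightarrow> blocks A e \<Longrightarrow> blocks B e"
  unfolding blocks_def by blast

lemma blocks_trans:
  assumes "\<And>b. b \<in> B \<Longrightarrow> blocks A b" and "blocks B e"
  shows "blocks A e"
proof -
  have "set p \<inter> A \<noteq> {}"
    if "is_path E tail head p" "head (last p) = t" "set p \<inter> B \<noteq> {}" for p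
    using that
  proof (induction p)
    case (Cons e q)
    show ?case
    proof (cases "e \<in> B")
      case True
      then show ?thesis
        using assms(1) Cons.prems(1,2) unfolding blocks_def by (metis list.sel(1))
    next
      case False
      then have "q \<noteq> []" "set q \<inter> B \<noteq> {}"
        using Cons.prems(3) by auto
      then show ?thesis
        using Cons.IH Cons.prems(1,2) by (auto simp: is_path_Cons)
    qed
  qed simp
  then show ?thesis
    using assms(2) unfolding blocks_def by blast
qed

lemma blocks_successor:
  assumes "blocks A e" "e \<in> E" "e \<notin> A" "f \<in> Out_edges E tail (head e)"
  shows "blocks A f"
  unfolding blocks_def
proof (intro allI impI)
  fix q assume q: "is_path E tail head q \<and> hd q = f \<and> head (last q) = t"
  then have "is_path E tail head (e # q)" "head (last (e # q)) = t"
    using assms(2,4) is_path_nonempty[of E tail head q] by (auto simp: is_path_Cons Out_edges_def)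
  then have "set (e # q) \<inter> A \<noteq> {}"
    using assms(1) unfolding blocks_def by (metis list.sel(1))
  then show "set q \<inter> A \<noteq> {}"
    using assms(3) by simp
qed

lemma blocks_head_ne_sink:
  assumes "blocks A e" "e \<in> E" "e \<notin> A"
  shows "head e \<noteq> t"
  using assms(1)[unfolded blocks_def, rule_format, of "[e]"] assms(2,3) by auto

lemma boundary_subset: "boundary S \<subseteq> S"
  unfolding boundary_def by blast

text \<open>A path from S to t meets the boundary of S at the last edge before it leaves S
  for the first time (or at its last edge if it never leaves S).\<close>
lemma blocks_boundary:
  assumes "e \<in> S"
  shows "blocks (boundary S) e"
proof -
  have "set p \<inter> boundary S \<noteq> {}"
    if "is_path E tail head p" "hd p \<in> S" "head (last p) = t" for p
    using that
  proof (induction p)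
    case (Cons e q)
    show ?case
    proof (cases "q = [] \<or> hd q \<notin> S")
      case True
      then have "e \<in> boundary S"
        using Cons.prems is_path_hd_in[of E tail head q]
        by (auto simp: boundary_def Out_edges_def is_path_Cons)
      then show ?thesis by simp
    next
      case False
      then show ?thesis
        using Cons.IH Cons.prems by (auto simp: is_path_Cons)
    qed
  qed (simp add: is_path_def)
  then show ?thesis
    using assms unfolding blocks_def by blast
qed

lemma boundary_blocked_by_subset: "boundary (blocked_by A) \<subseteq> A"
proof
  fix e assume e: "e \<in> boundary (blocked_by A)"
  then have "e \<in> E" "blocks A e"
    unfolding boundary_def blocked_by_def by auto
  show "e \<in> A"
  proof (rule ccontr)
    assume "e \<notin> A"
    then have "Out_edges E tail (head e) \<subseteq> blocked_by A"
      using \<open>e \<in> E\<close> \<open>blocks A e\<close> blocks_successor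
      unfolding blocked_by_def Out_edges_def by blast
    moreover have "head e \<noteq> t"
      using \<open>blocks A e\<close> \<open>e \<in> E\<close> \<open>e \<notin> A\<close> by (rule blocks_head_ne_sink)
    ultimately show False
      using e unfolding boundary_def by blast
  qed
qed

lemma finite_boundary: "S \<subseteq> E \<Longrightarrow> finite (boundary S)"
  using finite_E boundary_subset by (meson finite_subset)

lemma card_boundary_submodular:
  assumes "S \<subseteq> E" "S' \<subseteq> E"
  shows "card (boundary (S \<inter> S')) + card (boundary (S \<union> S')) \<le> card (boundary S) + card (boundary S')"
proof -
  have finite: "finite (boundary S)" "finite (boundary S')"
    "finite (boundary (S \<inter> S'))" "finite (boundary (S \<union> S'))"
    using assms by (simp_all add: finite_boundary le_infI1)
  have "boundary (S \<inter> S') \<union> boundary (S \<union> S') \<subseteq> boundary S \<union> boundary S'"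
    "boundary (S \<inter> S') \<inter> boundary (S \<union> S') \<subseteq> boundary S \<inter> boundary S'"
    unfolding boundary_def by blast+
  then have "card (boundary (S \<inter> S') \<union> boundary (S \<union> S')) + card (boundary (S \<inter> S') \<inter> boundary (S \<union> S'))
      \<le> card (boundary S \<union> boundary S') + card (boundary S \<inter> boundary S')"
    using finite by (intro add_mono card_mono) simp_all
  moreover have "card (boundary (S \<inter> S')) + card (boundary (S \<union> S'))
      = card (boundary (S \<inter> S') \<union> boundary (S \<union> S')) + card (boundary (S \<inter> S') \<inter> boundary (S \<union> S'))"
    using finite(3,4) by (rule card_Un_Int)
  moreover have "card (boundary S) + card (boundary S')
      = card (boundary S \<union> boundary S') + card (boundary S \<inter> boundary S')"
    using finite(1,2) by (rule card_Un_Int)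
  ultimately show ?thesis
    by linarith
qed

lemma mincut_le_card: "set_cut E tail head A X t \<Longrightarrow> mincut E tail head X t \<le> card A"
  unfolding mincut_def by (rule Least_le) blast

lemma min_set_cut_exists: "\<exists>A. min_set_cut E tail head A X t"
proof -
  have "set_cut E tail head E X t"
    unfolding set_cut_def is_path_def by (auto simp: Int_absorb2)
  then have "\<exists>n A. set_cut E tail head A X t \<and> card A = n"
    by blast
  from LeastI_ex[OF this] show ?thesis
    unfolding min_set_cut_def mincut_def .
qed

lemma mincut_le_card_boundary:
  assumes "X \<subseteq> S" "S \<subseteq> E"
  shows "mincut E tail head X t \<le> card (boundary S)"
proof (rule mincut_le_card)
  show "set_cut E tail head (boundary S) X t"
    unfolding set_cut_iff_blocks using assms boundary_subset blocks_boundary by blast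
qed

definition tight :: "'e set \<Rightarrow> 'e set \<Rightarrow> bool" where
  "tight X S \<longleftrightarrow> X \<subseteq> S \<and> S \<subseteq> E \<and> card (boundary S) = mincut E tail head X t"

lemma tight_blocked_by:
  assumes "X \<subseteq> E" "min_set_cut E tail head B X t"
  shows "tight X (blocked_by B)"
proof -
  have B: "B \<subseteq> E" "\<forall>e\<in>X. blocks B e" "card B = mincut E tail head X t"
    using assms(2) unfolding min_set_cut_def set_cut_iff_blocks by auto
  have sub: "X \<subseteq> blocked_by B" "blocked_by B \<subseteq> E"
    using B(2) assms(1) unfolding blocked_by_def by auto
  have "card (boundary (blocked_by B)) \<le> mincut E tail head X t"
    using boundary_blocked_by_subset B(1,3) finite_E by (metis card_mono finite_subset)
  moreover have "mincut E tail head X t \<le> card (boundary (blocked_by B))"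
    using sub by (rule mincut_le_card_boundary)
  ultimately show ?thesis
    using sub unfolding tight_def by simp
qed

lemma tight_Un:
  assumes "tight X S" "tight X S'"
  shows "tight X (S \<union> S')"
proof -
  have S: "X \<subseteq> S" "S \<subseteq> E" and S': "X \<subseteq> S'" "S' \<subseteq> E"
    using assms unfolding tight_def by auto
  have "mincut E tail head X t \<le> card (boundary (S \<inter> S'))"
    "mincut E tail head X t \<le> card (boundary (S \<union> S'))"
    using S S' by (auto intro!: mincut_le_card_boundary)
  moreover have "card (boundary (S \<inter> S')) + card (boundary (S \<union> S'))
      \<le> mincut E tail head X t + mincut E tail head X t"
    using card_boundary_submodular[OF S(2) S'(2)] assms unfolding tight_def by simp
  ultimately show ?thesis
    using S S' unfolding tight_def by auto
qed

text \<open>The primary cut is the boundary of the largest tight superset of X; it exists because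
  tight sets are closed under union, and it dominates every minimum cut B because the edges
  blocked by B form a tight set.\<close>
lemma primary_cut_exists:
  assumes "X \<subseteq> E"
  shows "\<exists>P. primary_cut E tail head P X t"
proof -
  obtain B where "min_set_cut E tail head B X t"
    using min_set_cut_exists by blast
  then have "{S. tight X S} \<noteq> {}"
    using tight_blocked_by[OF assms] by blast
  moreover have "finite {S. tight X S}"
    using finite_E unfolding tight_def by (auto intro: finite_subset[of _ "Pow E"])
  ultimately obtain S where S: "tight X S" and maximal: "\<And>S'. tight X S' \<Longrightarrow> S \<subseteq> S' \<Longrightarrow> S = S'"
    using finite_has_maximal[of "{S. tight X S}"] by auto
  have greatest: "S' \<subseteq> S" if "tight X S'" for S'
    using maximal[OF tight_Un[OF S that]] by blast
  have "primary_cut E tail head (boundary S) X t"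
    unfolding primary_cut_def
  proof (intro conjI allI impI)
    show "min_set_cut E tail head (boundary S) X t"
      unfolding min_set_cut_def set_cut_iff_blocks
      using S boundary_subset blocks_boundary unfolding tight_def by blast
  next
    fix B assume B: "min_set_cut E tail head B X t"
    have "B \<subseteq> blocked_by B"
      using B blocks_member unfolding blocked_by_def min_set_cut_def set_cut_def by blast
    then show "set_cut E tail head (boundary S) B t"
      unfolding set_cut_iff_blocks
      using S greatest[OF tight_blocked_by[OF assms B]] boundary_subset blocks_boundary
      unfolding tight_def by blast
  qed
  then show ?thesis ..
qed

lemma primary_cut_is_primary:
  assumes "primary_cut E tail head P X t"
  shows "is_primary E tail head P t"
proof -
  have P: "set_cut E tail head P X t" "card P = mincut E tail head X t"
    using assms unfolding primary_cut_def min_set_cut_def by auto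
  have cut_of_P: "set_cut E tail head C X t" if "set_cut E tail head C P t" for C
    using that P(1) blocks_trans unfolding set_cut_iff_blocks by blast
  have P_cuts_P: "set_cut E tail head P P t"
    using P(1) blocks_member unfolding set_cut_iff_blocks by blast
  have mincut_P: "mincut E tail head P t = card P"
  proof -
    obtain C where "min_set_cut E tail head C P t"
      using min_set_cut_exists by blast
    then have "card P \<le> mincut E tail head P t"
      using mincut_le_card[OF cut_of_P] P(2) unfolding min_set_cut_def by metis
    then show ?thesis
      using mincut_le_card[OF P_cuts_P] by simp
  qed
  show ?thesis
    unfolding is_primary_def primary_cut_def
  proof (intro conjI allI impI)
    show "min_set_cut E tail head P P t"
      unfolding min_set_cut_def using P_cuts_P mincut_P by simp
  next
    fix B assume "min_set_cut E tail head B P t"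
    then have "min_set_cut E tail head B X t"
      using cut_of_P mincut_P P(2) unfolding min_set_cut_def by simp
    then show "set_cut E tail head P B t"
      using assms unfolding primary_cut_def by blast
  qed
qed

lemma mincut_insert_le:
  assumes "a \<in> E"
  shows "mincut E tail head (insert a X) t \<le> Suc (mincut E tail head X t)"
proof -
  obtain C where C: "min_set_cut E tail head C X t"
    using min_set_cut_exists by blast
  then have "set_cut E tail head (insert a C) (insert a X) t"
    using assms blocks_member blocks_mono[of C "insert a C"]
    unfolding min_set_cut_def set_cut_iff_blocks by blast
  then have "mincut E tail head (insert a X) t \<le> card (insert a C)"
    by (rule mincut_le_card)
  also have "\<dots> \<le> Suc (card C)"
    by (cases "finite C") (simp_all add: card_insert_if)
  finally show ?thesis
    using C unfolding min_set_cut_def by simp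
qed

lemma mincut_intermediate:
  assumes "finite F" "F \<subseteq> E"
    and "mincut E tail head X t \<le> r" "r \<le> mincut E tail head (X \<union> F) t"
  shows "\<exists>X'. X \<subseteq> X' \<and> X' \<subseteq> X \<union> F \<and> mincut E tail head X' t = r"
  using assms
proof (induction F arbitrary: X rule: finite_induct)
  case (insert a F)
  show ?case
  proof (cases "mincut E tail head X t = r")
    case False
    then have "mincut E tail head (insert a X) t \<le> r"
      using insert.prems mincut_insert_le[of a X] by simp
    moreover have "insert a X \<union> F = X \<union> insert a F"
      by blast
    ultimately obtain X' where "insert a X \<subseteq> X'" "X' \<subseteq> X \<union> insert a F" "mincut E tail head X' t = r"
      using insert.IH[of "insert a X"] insert.prems by auto
    then show ?thesis
      by blast
  qed blast
qed auto

lemma card_In_edges_le_mincut: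
  assumes "In_edges E head t \<subseteq> X"
  shows "card (In_edges E head t) \<le> mincut E tail head X t"
proof -
  obtain C where C: "min_set_cut E tail head C X t"
    using min_set_cut_exists by blast
  have "In_edges E head t \<subseteq> C"
  proof
    fix e assume e: "e \<in> In_edges E head t"
    then have "blocks C e"
      using C assms unfolding min_set_cut_def set_cut_iff_blocks by blast
    then show "e \<in> C"
      using e unfolding blocks_def In_edges_def by (auto dest: spec[of _ "[e]"])
  qed
  moreover have "finite C"
    using C finite_E unfolding min_set_cut_def set_cut_def by (auto intro: finite_subset)
  ultimately show ?thesis
    using C unfolding min_set_cut_def by (metis card_mono)
qed

lemma primary_cut_of_bounded_mincut:
  assumes "xi \<in> calE E tail head t r" "r \<le> card (In_edges E head t)"
  shows "\<exists>P\<in>calA E tail head t r. set_cut E tail head P xi t"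
proof -
  have xi: "xi \<subseteq> E" "mincut E tail head xi t \<le> r"
    using assms(1) unfolding calE_def by auto
  have In: "In_edges E head t \<subseteq> E" "finite (In_edges E head t)"
    using finite_E unfolding In_edges_def by auto
  then have "r \<le> mincut E tail head (xi \<union> In_edges E head t) t"
    using assms(2) card_In_edges_le_mincut[of "xi \<union> In_edges E head t"] by simp
  then obtain X where X: "xi \<subseteq> X" "X \<subseteq> E" "mincut E tail head X t = r"
    using mincut_intermediate[OF In(2,1) xi(2)] xi(1) In(1) by blast
  obtain P where P: "primary_cut E tail head P X t"
    using primary_cut_exists[OF X(2)] by blast
  then have "P \<in> calA E tail head t r"
    using primary_cut_is_primary[OF P] X(3)
    unfolding calA_def primary_cut_def min_set_cut_def set_cut_def by auto
  moreover have "set_cut E tail head P xi t"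
    using P X(1) unfolding primary_cut_def min_set_cut_def set_cut_iff_blocks by blast
  ultimately show ?thesis ..
qed

end

section \<open>Extended global encoding kernels\<close>

locale lnec_code = sink_cuts E tail head t
  for E :: "'e set" and tail head :: "'e \<Rightarrow> 'v" and t :: 'v +
  fixes s :: 'v and \<omega> :: nat and k :: "(nat + 'e) \<Rightarrow> 'e \<Rightarrow> 'f::field"
  assumes no_edge_into_source: "\<forall>e\<in>E. head e \<noteq> s"
    and no_cycle: "\<forall>p. is_path E tail head p \<longrightarrow> tail (hd p) \<noteq> head (last p)"
begin

definition succ_rel :: "('e \<times> 'e) set" where
  "succ_rel = {(a, b). a \<in> E \<and> b \<in> E \<and> head a = tail b}"

lemma succ_rel_trancl_path:
  assumes "(a, b) \<in> succ_rel\<^sup>+"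
  shows "\<exists>p. is_path E tail head p \<and> hd p = a \<and> head (last p) = tail b"
  using assms
proof (induction rule: converse_trancl_induct)
  case (base a)
  then show ?case
    unfolding succ_rel_def by (intro exI[of _ "[a]"]) auto
next
  case (step a c)
  then obtain p where p: "is_path E tail head p" "hd p = c" "head (last p) = tail b"
    by blast
  then have "is_path E tail head (a # p)"
    using step.hyps(1) is_path_nonempty unfolding succ_rel_def by (auto simp: is_path_Cons)
  then show ?case
    using p is_path_nonempty by (intro exI[of _ "a # p"]) auto
qed

lemma acyclic_succ_rel: "acyclic succ_rel"
  unfolding acyclic_def using succ_rel_trancl_path no_cycle by fastforce

lemma finite_succ_rel: "finite succ_rel"
proof -
  have "succ_rel \<subseteq> E \<times> E"
    unfolding succ_rel_def by auto
  then show ?thesis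
    using finite_E finite_subset by blast
qed

lemma wf_succ_rel: "wf succ_rel"
  using finite_acyclic_wf finite_succ_rel acyclic_succ_rel by blast

lemma wf_converse_succ_rel: "wf (succ_rel\<inverse>)"
  using finite_acyclic_wf_converse finite_succ_rel acyclic_succ_rel by blast

definition kernel_step :: "('e \<Rightarrow> (nat + 'e) \<Rightarrow> 'f) \<Rightarrow> 'e \<Rightarrow> (nat + 'e) \<Rightarrow> 'f" where
  "kernel_step F e =
     (if e \<in> E then (\<lambda>x. (\<Sum>d\<in>In_ext E head s \<omega> (tail e). k d e * gk_of F d x) + unitv (Inr e) x)
      else (\<lambda>_. 0))"

lemma kernel_eqns_iff_fixpoint: "kernel_eqns E tail head s \<omega> k F \<longleftrightarrow> F = kernel_step F"
  unfolding kernel_eqns_def kernel_step_def fun_eq_iff[of F] by auto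

lemma kernel_step_cong:
  assumes "\<And>d. (d, e) \<in> succ_rel \<Longrightarrow> F d = F' d"
  shows "kernel_step F e = kernel_step F' e"
proof (cases "e \<in> E")
  case True
  have "gk_of F d = gk_of F' d" if "d \<in> In_ext E head s \<omega> (tail e)" for d
    using that True assms
    unfolding In_ext_def In_edges_def gk_of_def succ_rel_def by (auto split: if_splits)
  then show ?thesis
    unfolding kernel_step_def by (auto intro!: sum.cong)
qed (simp add: kernel_step_def)

lemma ext_kernel_eqns: "kernel_eqns E tail head s \<omega> k (ext_kernel E tail head s \<omega> k)"
proof -
  have "adm_wf succ_rel kernel_step"
    unfolding adm_wf_def using kernel_step_cong by blast
  then have "kernel_eqns E tail head s \<omega> k (wfrec succ_rel kernel_step)"
    unfolding kernel_eqns_iff_fixpoint by (rule wfrec_fixpoint[OF wf_succ_rel])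
  moreover have "F = F'" if "kernel_eqns E tail head s \<omega> k F" "kernel_eqns E tail head s \<omega> k F'" for F F'
  proof
    fix e
    show "F e = F' e"
      using wf_succ_rel
    proof (induction e rule: wf_induct_rule)
      case (less e)
      then have "kernel_step F e = kernel_step F' e"
        by (rule kernel_step_cong)
      then show ?case
        using that unfolding kernel_eqns_iff_fixpoint by metis
    qed
  qed
  ultimately have "\<exists>!F. kernel_eqns E tail head s \<omega> k F"
    by blast
  then show ?thesis
    unfolding ext_kernel_def by (rule theI')
qed

abbreviation kernel :: "'e \<Rightarrow> (nat + 'e) \<Rightarrow> 'f" where
  "kernel \<equiv> ext_kernel E tail head s \<omega> k"

lemma kernel_outside: "d \<notin> E \<Longrightarrow> kernel d = (\<lambda>_. 0)"
  using ext_kernel_eqns unfolding kernel_eqns_def by blast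

lemma kernel_error_coord:
  assumes "d \<in> E"
  shows "kernel d (Inr x)
    = (\<Sum>d0\<in>In_edges E head (tail d). k (Inr d0) d * kernel d0 (Inr x)) + of_bool (x = d)"
proof -
  have "kernel d (Inr x)
      = (\<Sum>c\<in>In_ext E head s \<omega> (tail d). k c d * gk_of kernel c (Inr x)) + of_bool (x = d)"
    using ext_kernel_eqns assms unfolding kernel_eqns_def by (simp add: unitv_def)
  also have "(\<Sum>c\<in>In_ext E head s \<omega> (tail d). k c d * gk_of kernel c (Inr x))
      = (\<Sum>d0\<in>In_edges E head (tail d). k (Inr d0) d * kernel d0 (Inr x))"
  proof (cases "tail d = s")
    case True
    then have "In_edges E head (tail d) = {}"
      using no_edge_into_source unfolding In_edges_def by auto
    then show ?thesis
      using True unfolding In_ext_def by (simp add: sum.reindex gk_of_def unitv_def)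
  next
    case False
    then show ?thesis
      unfolding In_ext_def by (simp add: sum.reindex gk_of_def)
  qed
  finally show ?thesis .
qed

text \<open>Dual to kernel_error_coord, which splits off the last edge before d, this splits
  off the first edge after e.\<close>
lemma kernel_error_expansion:
  assumes "e \<in> E"
  shows "kernel d (Inr e)
    = of_bool (d = e) + (\<Sum>f\<in>Out_edges E tail (head e). k (Inr e) f * kernel d (Inr f))"
  using wf_succ_rel
proof (induction d rule: wf_induct_rule)
  case (less d)
  show ?case
  proof (cases "d \<in> E")
    case False
    then show ?thesis
      using kernel_outside assms by auto
  next
    case True
    let ?I = "In_edges E head (tail d)" and ?O = "Out_edges E tail (head e)"
    have finite: "finite ?I" "finite ?O"
      using finite_E unfolding In_edges_def Out_edges_def by auto
    have IH: "kernel d0 (Inr e) = of_bool (d0 = e) + (\<Sum>f\<in>?O. k (Inr e) f * kernel d0 (Inr f))"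
      if "d0 \<in> ?I" for d0
      using less that True unfolding In_edges_def succ_rel_def by auto
    have "?I \<inter> {d0. d0 = e} = (if head e = tail d then {e} else {})"
      "?O \<inter> {f. f = d} = (if head e = tail d then {d} else {})"
      using True assms unfolding In_edges_def Out_edges_def by auto
    then have direct: "(\<Sum>d0\<in>?I. k (Inr d0) d * of_bool (d0 = e)) = (\<Sum>f\<in>?O. k (Inr e) f * of_bool (f = d))"
      using finite by simp
    have swap: "(\<Sum>d0\<in>?I. \<Sum>f\<in>?O. k (Inr d0) d * (k (Inr e) f * kernel d0 (Inr f)))
        = (\<Sum>f\<in>?O. k (Inr e) f * (\<Sum>d0\<in>?I. k (Inr d0) d * kernel d0 (Inr f)))"
      by (subst sum.swap) (simp add: sum_distrib_left mult.left_commute)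
    have "kernel d (Inr e) = (\<Sum>d0\<in>?I. k (Inr d0) d * kernel d0 (Inr e)) + of_bool (e = d)"
      using True by (rule kernel_error_coord)
    also have "\<dots> = (\<Sum>d0\<in>?I. k (Inr d0) d * of_bool (d0 = e))
        + (\<Sum>d0\<in>?I. \<Sum>f\<in>?O. k (Inr d0) d * (k (Inr e) f * kernel d0 (Inr f))) + of_bool (e = d)"
      using IH by (simp add: distrib_left sum.distrib sum_distrib_left)
    also have "\<dots> = (\<Sum>f\<in>?O. k (Inr e) f * of_bool (f = d))
        + (\<Sum>f\<in>?O. k (Inr e) f * (\<Sum>d0\<in>?I. k (Inr d0) d * kernel d0 (Inr f))) + of_bool (e = d)"
      by (simp only: direct swap)
    also have "\<dots> = of_bool (d = e)
        + (\<Sum>f\<in>?O. k (Inr e) f * ((\<Sum>d0\<in>?I. k (Inr d0) d * kernel d0 (Inr f)) + of_bool (f = d)))"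
      by (simp add: distrib_left sum.distrib add_ac eq_commute[of e d])
    also have "\<dots> = of_bool (d = e) + (\<Sum>f\<in>?O. k (Inr e) f * kernel d (Inr f))"
      by (simp add: kernel_error_coord[OF True])
    finally show ?thesis .
  qed
qed

abbreviation error_row :: "'e \<Rightarrow> 'e \<Rightarrow> 'f" where
  "error_row x \<equiv> row E tail head s \<omega> k t (Inr x)"

lemma error_row_expansion:
  assumes "e \<in> E" "head e \<noteq> t"
  shows "error_row e = (\<lambda>d. \<Sum>f\<in>Out_edges E tail (head e). k (Inr e) f * error_row f d)"
proof
  fix d
  show "error_row e d = (\<Sum>f\<in>Out_edges E tail (head e). k (Inr e) f * error_row f d)"
  proof (cases "d \<in> In_edges E head t")
    case True
    then have "d \<noteq> e"
      using assms(2) unfolding In_edges_def by auto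
    then show ?thesis
      using True kernel_error_expansion[OF assms(1)] unfolding row_def by simp
  qed (simp add: row_def)
qed

lemma error_row_in_lin_span:
  assumes "e \<in> E" "A \<subseteq> E" "blocks A e"
  shows "error_row e \<in> lin_span A error_row"
  using wf_converse_succ_rel assms
proof (induction e rule: wf_induct_rule)
  case (less e)
  have "finite A"
    using \<open>A \<subseteq> E\<close> finite_E finite_subset by blast
  show ?case
  proof (cases "e \<in> A")
    case True
    with \<open>finite A\<close> show ?thesis
      by (rule generator_in_lin_span)
  next
    case False
    let ?O = "Out_edges E tail (head e)"
    have "finite ?O"
      using finite_E unfolding Out_edges_def by simp
    have "error_row f \<in> lin_span A error_row" if "f \<in> ?O" for f
      using less.IH less.prems that blocks_successor[OF less.prems(3,1) False]
      unfolding Out_edges_def succ_rel_def by auto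
    then have "lin_span ?O error_row \<subseteq> lin_span A error_row"
      using \<open>finite ?O\<close> by (rule lin_span_subset[rotated])
    moreover have "error_row e \<in> lin_span ?O error_row"
      unfolding error_row_expansion[OF less.prems(1) blocks_head_ne_sink[OF less.prems(3,1) False]]
      by (rule lin_span_combination)
    ultimately show ?thesis
      by blast
  qed
qed

lemma err_space_subset_of_cut:
  assumes "X \<subseteq> E" "set_cut E tail head A X t"
  shows "err_space E tail head s \<omega> k t X \<subseteq> err_space E tail head s \<omega> k t A"
  unfolding err_space_def
proof (rule lin_span_subset)
  show "finite X"
    using assms(1) finite_E finite_subset by blast
  show "error_row e \<in> lin_span A error_row" if "e \<in> X" for e
    using that assms error_row_in_lin_span unfolding set_cut_iff_blocks by blast
qed

lemma msg_err_trivial_of_cut: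
  assumes "msg_space E tail head s \<omega> k t \<inter> err_space E tail head s \<omega> k t A = {\<lambda>_. 0}"
    and "X \<subseteq> E" "set_cut E tail head A X t"
  shows "msg_space E tail head s \<omega> k t \<inter> err_space E tail head s \<omega> k t X = {\<lambda>_. 0}"
proof -
  have "(\<lambda>_. 0) \<in> msg_space E tail head s \<omega> k t \<inter> err_space E tail head s \<omega> k t X"
    unfolding msg_space_def err_space_def by (simp add: zero_in_lin_span)
  then show ?thesis
    using assms err_space_subset_of_cut by blast
qed

end

lemma maxflow_le_card_In_edges: "maxflow E tail head s t \<le> card (In_edges E head t)"
proof -
  have "node_cut E tail head (In_edges E head t) s t"
    unfolding node_cut_def
  proof (intro conjI allI impI)
    show "In_edges E head t \<subseteq> E"
      unfolding In_edges_def by auto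
    fix p assume "is_path E tail head p \<and> tail (hd p) = s \<and> head (last p) = t"
    then have "last p \<in> set p \<inter> In_edges E head t"
      unfolding is_path_def In_edges_def by auto
    then show "set p \<inter> In_edges E head t \<noteq> {}"
      by blast
  qed
  then show ?thesis
    unfolding maxflow_def by (intro Least_le) blast
qed

lemma calA_subset_calE: "calA E tail head t r \<subseteq> calE E tail head t r"
  unfolding calA_def calE_def is_primary_def primary_cut_def min_set_cut_def by auto

theorem theorem8:
  fixes V :: "'v set" and E :: "'e set" and tail head :: "'e \<Rightarrow> 'v"
    and s :: 'v and T :: "'v set" and \<omega> :: nat
    and k :: "(nat + 'e) \<Rightarrow> 'e \<Rightarrow> 'f::{field,finite}"
    and t :: 'v and r :: nat
  assumes "network V E tail head s T"
    and "\<omega> \<ge> 1"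
    and "t \<in> T"
    and "maxflow E tail head s t \<ge> \<omega>"
    and "r \<le> maxflow E tail head s t - \<omega>"
  shows "(\<forall>xi\<in>calE E tail head t r.
            msg_space E tail head s \<omega> k t \<inter> err_space E tail head s \<omega> k t xi = {\<lambda>_. 0})
     \<longleftrightarrow> (\<forall>xi\<in>calA E tail head t r.
            msg_space E tail head s \<omega> k t \<inter> err_space E tail head s \<omega> k t xi = {\<lambda>_. 0})"
proof
  let ?trivial = "\<lambda>xi. msg_space E tail head s \<omega> k t \<inter> err_space E tail head s \<omega> k t xi = {\<lambda>_. 0}"
  show "\<forall>xi\<in>calA E tail head t r. ?trivial xi" if "\<forall>xi\<in>calE E tail head t r. ?trivial xi"
    using that calA_subset_calE by (meson subsetD)
  have "finite E" "\<forall>e\<in>E. head e \<noteq> s"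
    "\<forall>p. is_path E tail head p \<longrightarrow> tail (hd p) \<noteq> head (last p)"
    using assms(1) unfolding network_def by blast+
  then interpret lnec_code E tail head t s \<omega> k
    by unfold_locales
  have "r \<le> card (In_edges E head t)"
    using maxflow_le_card_In_edges[of E tail head s t] assms(5) by linarith
  show "\<forall>xi\<in>calE E tail head t r. ?trivial xi" if trivial_on_calA: "\<forall>xi\<in>calA E tail head t r. ?trivial xi"
  proof
    fix xi assume xi: "xi \<in> calE E tail head t r"
    then obtain P where P: "P \<in> calA E tail head t r" "set_cut E tail head P xi t"
      using primary_cut_of_bounded_mincut \<open>r \<le> card (In_edges E head t)\<close> by blast
    have "?trivial P"
      using trivial_on_calA P(1) by (rule bspec)
    moreover have "xi \<subseteq> E"
      using xi unfolding calE_def by blast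
    ultimately show "?trivial xi"
      using P(2) by (rule msg_err_trivial_of_cut)
  qed
qed

end
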